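(* Let $n>4$ be even and let $P=(A_1,\dots,A_n)$ be a cyclic $n$-gon (distinct vertices on a circle of radius $R$) with vertices ordered anticlockwise. Put $\delta_{pq}=|A_pA_q|$ and, for $m\in\{1,\dots,n\}$, \[\delta(m)=\prod_{\substack{i=1\\ i\ne m}}^{n-1}\ \prod_{\substack{j=i+1\\ j\ne m}}^{n}\delta_{ij}.\] Then: (i) for $m$ even, $2\le m\le n$, \[ \begin{aligned} \delta(m)={}&R^{\frac{n-2}{2}}\left(\prod_{k=1}^{m-1}\Big(\prod_{\substack{l=k+1\\ l\text{ even}}}^{m-1}S_{k,l,l+1}\prod_{\substack{l=m+1\\ l\text{ odd}}}^{n-1}S_{k,l,l+1}\Big)\right)\left(\prod_{k=m}^{n-3}\prod_{\substack{l=k+2\\ l\text{ odd}}}^{n-1}S_{k+1,l,l+1}\right)\\ &\cdot\left(\prod_{\substack{k=2\\ k\text{ even}}}^{m-1}\prod_{\substack{l=k+1\\ l\text{ even}}}^{m-1}\frac{R^2}{x_{l,l+1}}\right)\left(\prod_{\substack{k=m\\ k\text{ even}}}^{n-3}\prod_{\substack{l=k+2\\ l\text{ odd}}}^{n-1}\frac{R^2}{x_{l,l+1}}\right)\left(\prod_{\substack{l=m+1\\ l\text{ odd}}}^{n-1}\frac{R^{m-2}}{x_{l,l+1}^{\frac{m-2}{2}}}\right); \end{aligned} \] (ii) \[ \delta(1)=\left(\prod_{k=1}^{n-3}\prod_{\substack{l=k+2\\ l\text{ odd}}}^{n-1}S_{k+1,l,l+1}R\right)\left(\prod_{\substack{k=2\\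 k\text{ even}}}^{n-3}\prod_{\substack{l=k+2\\ l\text{ odd}}}^{n-1}\frac{1}{x_{l,l+1}}\right); \] (iii) \[ \delta(3)=S_{124}R\left(\prod_{\substack{l=5\\ l\text{ odd}}}^{n-1}S_{1,l,l+1}S_{2,l,l+1}R^2\right)\left(\prod_{k=3}^{n-3}\prod_{\substack{l=k+2\\ l\text{ odd}}}^{n-1}S_{k+1,l,l+1}R\right)\left(\prod_{\substack{k=3\\ k\text{ odd}}}^{n-3}\prod_{\substack{l=k+2\\ l\text{ odd}}}^{n-1}\frac{1}{x_{l,l+1}}\right); \] (iv) for $m$ odd, $3<m\le n-1$, \[ \begin{aligned} \delta(m)={}&\frac{S_{1,2,m-1}S_{1,2,m+1}R^2}{x_{12}}\left(\prod_{\substack{l=2\\ l\text{ even}}}^{m-2}S_{1,l,l+1}R\right)\left(\prod_{\substack{l=m+2\\ l\text{ odd}}}^{n-1}S_{1,l,l+1}R\right)\left(\prod_{\substack{l=m+2\\ l\text{ odd}}}^{n-1}\frac{S_{m-1,l,l+1}S_{m-3,l,l+1}R^2}{x_{l,l+1}}\right)\\ &\cdot\left(\prod_{\substack{k=3\\ k\text{ odd}}}^{m-4}\Big(\frac{S_{k,k+1,m-1}S_{k,k+1,m+1}R^2}{x_{k,k+1}}\prod_{\substack{l=k+1\\ l\text{ even}}}^{m-2}\frac{S_{k,l,l+1}R}{x_{l,l+1}}\prod_{\substack{l=m+2\\ l\text{ odd}}}^{n-1}\frac{1}{x_{l,l+1}}\Big)\right)\left(\prod_{\substack{k=2\\ k\text{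 even}}}^{m-5}\prod_{\substack{l=k+2\\ l\text{ even}}}^{m-2}S_{k,l,l+1}R\right)\\ &\cdot\left(\prod_{k=2}^{m-4}\prod_{\substack{l=m+2\\ l\text{ odd}}}^{n-1}S_{k,l,l+1}R\right)S_{m-2,m-1,m+1}R\left(\prod_{\substack{l=m+2\\ l\text{ odd}}}^{n-1}\frac{S_{m-2,l,l+1}R}{x_{l,l+1}}\right)\left(\prod_{\substack{k=m\\ k\text{ odd}}}^{n-3}S_{k+1,k+2,k+3}R\right)\\ &\cdot\left(\prod_{k=m}^{n-3}\prod_{\substack{l=k+3\\ l\text{ odd}}}^{n-1}S_{k+1,l,l+1}R\right)\left(\prod_{\substack{k=m\\ k\text{ odd}}}^{n-3}\prod_{\substack{l=k+3\\ l\text{ odd}}}^{n-1}\frac{1}{x_{l,l+1}}\right). \end{aligned} \]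
   Context: For points $A_p=(x_p,y_p)$, $x_{pq}:=(x_q-x_p)^2+(y_q-y_p)^2=\delta_{pq}^2$ is the squared distance between $A_p$ and $A_q$, and $S_{pqr}:=2[(x_q-x_p)(y_r-y_p)-(y_q-y_p)(x_r-x_p)]$ is four times the signed area of triangle $A_pA_qA_r$. A product $\prod_{\alpha}^{\beta}$ with $\alpha>\beta$ (or with no index of the required parity in range) equals $1$; "$k$ (resp. $l$) even/odd" restricts a product to indices of that parity. *)

theory Defs
  imports Complex_Main
begin

type_synonym point = "real \<times> real"

definition xsq :: "(nat \<Rightarrow> point) \<Rightarrow> nat \<Rightarrow> nat \<Rightarrow> real" where
  "xsq A p q = (fst (A q) - fst (A p))^2 + (snd (A q) - snd (A p))^2"

definition dl :: "(nat \<Rightarrow> point) \<Rightarrow> nat \<Rightarrow> nat \<Rightarrow> real" where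
  "dl A p q = sqrt (xsq A p q)"

text \<open>Four times the signed area of triangle A_p A_q A_r.\<close>
definition Sar :: "(nat \<Rightarrow> point) \<Rightarrow> nat \<Rightarrow> nat \<Rightarrow> nat \<Rightarrow> real" where
  "Sar A p q r = 2 * ((fst (A q) - fst (A p)) * (snd (A r) - snd (A p))
                    - (snd (A q) - snd (A p)) * (fst (A r) - fst (A p)))"

definition delta_m :: "(nat \<Rightarrow> point) \<Rightarrow> nat \<Rightarrow> nat \<Rightarrow> real" where
  "delta_m A n m = (\<Prod>i\<in>{1..n-1}-{m}. \<Prod>j\<in>{i+1..n}-{m}. dl A i j)"

definition prod_ev :: "nat \<Rightarrow> nat \<Rightarrow> (nat \<Rightarrow> real) \<Rightarrow> real" where
  "prod_ev a b f = (\<Prod>l\<in>{l\<in>{a..b}. even l}. f l)"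

definition prod_od :: "nat \<Rightarrow> nat \<Rightarrow> (nat \<Rightarrow> real) \<Rightarrow> real" where
  "prod_od a b f = (\<Prod>l\<in>{l\<in>{a..b}. odd l}. f l)"

text \<open>A_1..A_n are distinct points on the circle of radius R (centre c), in anticlockwise
  order: their polar angles about the centre can be chosen strictly increasing and
  within one full turn.\<close>
definition cyclic_anticlockwise :: "(nat \<Rightarrow> point) \<Rightarrow> nat \<Rightarrow> real \<Rightarrow> bool" where
  "cyclic_anticlockwise A n R \<longleftrightarrow> R > 0 \<and> inj_on A {1..n} \<and>
     (\<exists>c::point. \<exists>\<theta>::nat \<Rightarrow> real.
        (\<forall>i\<in>{1..n}. A i = (fst c + R * cos (\<theta> i), snd c + R * sin (\<theta> i))) \<and>
        (\<forall>i\<in>{1..<n}. \<theta> i < \<theta> (i+1)) \<and> \<theta> n < \<theta> 1 + 2 * pi)"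

end

theory Submission
  imports Defs
begin

(* For vertices p < q < r on the circle, S_pqr is four times the area of a positively oriented
   inscribed triangle, so the circumradius formula gives S_pqr R = delta_pq delta_qr delta_pr;
   moreover x_{l,l+1} = delta_{l,l+1}^2. After these substitutions each of (i)-(iv) is an identity
   between products of chord lengths, proved by induction on n in steps of two. Adding the
   vertices n+1, n+2 multiplies delta(m) by prod_{i <= n, i <> m} delta_{i,n+1} delta_{i,n+2}
   times delta_{n+1,n+2}, while each right-hand side gains the factor
   prod_{i <= n, i <> m} (S_{i,n+1,n+2} R) / x_{n+1,n+2}^((n-2)/2), which is the same product
   because there are n - 1 factors and x_{n+1,n+2} = delta_{n+1,n+2}^2. The base cases n = m
   (m even) and n = m + 1 (m odd, m > 3) are inductions on m in steps of two as well. *)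

section \<open>Triangles inscribed in a circle\<close>

lemma sin_double_add_identity:
  "sin (2*u) + sin (2*v) - sin (2*u + 2*v) = 4 * sin u * sin v * sin (u + v :: real)"
proof -
  have "2*u + 2*v = 2*(u+v)" by simp
  then show ?thesis
    unfolding sin_double cos_double sin_add cos_add
    using sin_cos_squared_add[of u] sin_cos_squared_add[of v] by algebra
qed

definition circle_point :: "point \<Rightarrow> real \<Rightarrow> real \<Rightarrow> point" where
  "circle_point c R \<theta> = (fst c + R * cos \<theta>, snd c + R * sin \<theta>)"

lemma dl_circle_points:
  assumes "A p = circle_point c R a" "A q = circle_point c R (a + 2*u)" "R \<ge> 0" "sin u \<ge> 0"
  shows "dl A p q = 2 * R * sin u"
proof -
  have "xsq A p q = (2 * R * sin u)^2"
    unfolding xsq_def assms(1,2) circle_point_def fst_conv snd_conv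
      cos_add sin_add sin_double cos_double
    using sin_cos_squared_add[of a] sin_cos_squared_add[of u] by algebra
  then show ?thesis using assms(3,4) unfolding dl_def by simp
qed

lemma Sar_circle_points:
  assumes "A p = circle_point c R a" "A q = circle_point c R (a + 2*u)"
    and "A r = circle_point c R (a + 2*u + 2*v)"
  shows "Sar A p q r = 8 * R^2 * sin u * sin v * sin (u + v)"
proof -
  have "Sar A p q r = 2 * R^2 * (sin (2*u) + sin (2*v) - sin (2*u + 2*v))"
    unfolding Sar_def assms circle_point_def fst_conv snd_conv sin_add cos_add
    using sin_cos_squared_add[of a] sin_cos_squared_add[of "2*u"] sin_cos_squared_add[of "2*v"]
    by algebra
  then show ?thesis unfolding sin_double_add_identity by simp
qed

locale inscribed_chords =
  fixes d :: "nat \<Rightarrow> nat \<Rightarrow> real" and S :: "nat \<Rightarrow> nat \<Rightarrow> nat \<Rightarrow> real"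
    and x :: "nat \<Rightarrow> nat \<Rightarrow> real" and R :: real and N :: nat
  assumes R_pos: "R > 0"
    and d_pos: "\<And>p q. 1 \<le> p \<Longrightarrow> p < q \<Longrightarrow> q \<le> N \<Longrightarrow> d p q > 0"
    and S_mult_R: "\<And>p q r. 1 \<le> p \<Longrightarrow> p < q \<Longrightarrow> q < r \<Longrightarrow> r \<le> N \<Longrightarrow>
                     S p q r * R = d p q * d q r * d p r"
    and x_consecutive: "\<And>l. x l (l+1) = (d l (l+1))^2"

lemma cyclic_anticlockwise_inscribed_chords:
  assumes "cyclic_anticlockwise A n R"
  shows "inscribed_chords (dl A) (Sar A) (xsq A) R n"
proof -
  have R: "R > 0" using assms unfolding cyclic_anticlockwise_def by simp
  obtain c \<theta> where A: "\<And>i. i \<in> {1..n} \<Longrightarrow> A i = circle_point c R (\<theta> i)"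
    and incr: "\<And>i. i \<in> {1..<n} \<Longrightarrow> \<theta> i < \<theta> (Suc i)" and turn: "\<theta> n < \<theta> 1 + 2 * pi"
    using assms unfolding cyclic_anticlockwise_def circle_point_def by auto
  define u where "u p q = (\<theta> q - \<theta> p) / 2" for p q
  have angle: "0 < u p q \<and> u p q < pi" if "1 \<le> p" "p < q" "q \<le> n" for p q
  proof -
    have "\<theta> p < \<theta> q" using lift_Suc_mono_less_ivl[of "{1..<n}" \<theta> p q] incr that by auto
    moreover have "\<theta> 1 \<le> \<theta> p" using lift_Suc_mono_le_ivl[of "{1..<n}" \<theta> 1 p] incr that by (auto intro: less_imp_le)
    moreover have "\<theta> q \<le> \<theta> n" using lift_Suc_mono_le_ivl[of "{1..<n}" \<theta> q n] incr that by (auto intro: less_imp_le)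
    ultimately show ?thesis using turn unfolding u_def by simp
  qed
  have chord: "dl A p q = 2 * R * sin (u p q) \<and> sin (u p q) > 0"
    if "1 \<le> p" "p < q" "q \<le> n" for p q
  proof -
    have "sin (u p q) > 0" using angle[OF that] by (simp add: sin_gt_zero)
    moreover have "\<theta> q = \<theta> p + 2 * u p q" unfolding u_def by (simp add: field_simps)
    ultimately show ?thesis using A[of p] A[of q] R that by (simp add: dl_circle_points)
  qed
  show ?thesis
  proof
    show "R > 0" by (fact R)
    show "dl A p q > 0" if "1 \<le> p" "p < q" "q \<le> n" for p q
      using chord[OF that] R by simp
    show "Sar A p q r * R = dl A p q * dl A q r * dl A p r"
      if "1 \<le> p" "p < q" "q < r" "r \<le> n" for p q r
    proof -
      have "\<theta> q = \<theta> p + 2 * u p q" "\<theta> r = \<theta> p + 2 * u p q + 2 * u q r" "u p r = u p q + u q r"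
        unfolding u_def by (simp_all add: field_simps)
      then have "Sar A p q r = 8 * R^2 * sin (u p q) * sin (u q r) * sin (u p r)"
        using A[of p] A[of q] A[of r] that by (simp add: Sar_circle_points)
      then show ?thesis using chord[of p q] chord[of q r] chord[of p r] that
        by (simp add: power2_eq_square)
    qed
    show "xsq A l (l+1) = (dl A l (l+1))^2" for l
      unfolding dl_def xsq_def by simp
  qed
qed

section \<open>Products over indices of one parity\<close>

lemma even_ge_2E:
  assumes "even (m::nat)" "2 \<le> m"
  obtains s where "m = 2*s + 2"
proof -
  obtain k where "m = 2*k" using assms(1) by blast
  then show ?thesis using assms(2) that[of "k - 1"] by simp
qed

lemma odd_ge_5E:
  assumes "odd (m::nat)" "5 \<le> m"
  obtains p where "m = 2*p + 5"
proof -
  obtain k where "m = 2*k + 1" using assms(1) by (rule oddE)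
  then show ?thesis using assms(2) that[of "k - 2"] by simp
qed

lemma prod_ev_empty: "b < a \<Longrightarrow> prod_ev a b f = 1"
  unfolding prod_ev_def by simp

lemma prod_od_empty: "b < a \<Longrightarrow> prod_od a b f = 1"
  unfolding prod_od_def by simp

lemma prod_ev_odd_singleton: "odd a \<Longrightarrow> prod_ev a a f = 1"
  unfolding prod_ev_def by (simp add: prod.neutral)

lemma prod_ev_pair: "even a \<Longrightarrow> prod_ev a (a+1) f = f a"
proof -
  assume "even a"
  then have "{l\<in>{a..a+1}. even l} = {a}" by (auto simp: le_Suc_eq)
  then show ?thesis unfolding prod_ev_def by simp
qed

lemma prod_ev_distrib: "prod_ev a b (\<lambda>k. f k * g k) = prod_ev a b f * prod_ev a b g"
  unfolding prod_ev_def by (rule prod.distrib)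

lemma prod_od_distrib: "prod_od a b (\<lambda>k. f k * g k) = prod_od a b f * prod_od a b g"
  unfolding prod_od_def by (rule prod.distrib)

lemma prod_ev_snoc_even: "even c \<Longrightarrow> a \<le> c+2 \<Longrightarrow> prod_ev a (c+2) f = prod_ev a c f * f (c+2)"
proof -
  assume "even c" "a \<le> c+2"
  then have "{l\<in>{a..c+2}. even l} = insert (c+2) {l\<in>{a..c}. even l}"
    by (auto simp: le_Suc_eq)
  then show ?thesis unfolding prod_ev_def by (simp add: mult.commute)
qed

lemma prod_ev_snoc_odd: "odd c \<Longrightarrow> a \<le> c+1 \<Longrightarrow> prod_ev a (c+2) f = prod_ev a c f * f (c+1)"
proof -
  assume "odd c" "a \<le> c+1"
  then have "{l\<in>{a..c+2}. even l} = insert (c+1) {l\<in>{a..c}. even l}"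
    by (auto simp: le_Suc_eq)
  then show ?thesis unfolding prod_ev_def by (simp add: mult.commute)
qed

lemma prod_od_snoc_odd: "odd c \<Longrightarrow> a \<le> c+2 \<Longrightarrow> prod_od a (c+2) f = prod_od a c f * f (c+2)"
proof -
  assume "odd c" "a \<le> c+2"
  then have "{l\<in>{a..c+2}. odd l} = insert (c+2) {l\<in>{a..c}. odd l}"
    by (auto simp: le_Suc_eq)
  then show ?thesis unfolding prod_od_def by (simp add: mult.commute)
qed

lemma prod_ev_times_prod_od: "prod_ev a b f * prod_od a b f = (\<Prod>l\<in>{a..b}. f l)"
proof -
  have "{a..b} = {l\<in>{a..b}. even l} \<union> {l\<in>{a..b}. odd l}" by auto
  then have "(\<Prod>l\<in>{a..b}. f l) = (\<Prod>l\<in>{l\<in>{a..b}. even l} \<union> {l\<in>{a..b}. odd l}. f l)"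
    by (rule arg_cong)
  also have "\<dots> = prod_ev a b f * prod_od a b f"
    unfolding prod_ev_def prod_od_def by (rule prod.union_disjoint) auto
  finally show ?thesis by simp
qed

lemma prod_od_Suc_shift: "prod_od a b (\<lambda>k. f (Suc k)) = prod_ev (Suc a) (Suc b) f"
proof -
  have "{l\<in>{Suc a..Suc b}. even l} = Suc ` {l\<in>{a..b}. odd l}"
  proof
    show "{l\<in>{Suc a..Suc b}. even l} \<subseteq> Suc ` {l\<in>{a..b}. odd l}"
    proof
      fix l assume "l \<in> {l\<in>{Suc a..Suc b}. even l}"
      then have "l = Suc (l - 1)" "l - 1 \<in> {l\<in>{a..b}. odd l}" by auto
      then show "l \<in> Suc ` {l\<in>{a..b}. odd l}" by blast
    qed
  qed auto
  then show ?thesis unfolding prod_ev_def prod_od_def by (simp add: prod.reindex)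
qed

lemma prod_ev_first:
  assumes "even a" "2 \<le> a" "a \<le> b"
  shows "prod_ev a b f = f a * prod_od (a+1) (b-1) (\<lambda>k. f (Suc k))"
proof -
  have "{l\<in>{a..b}. even l} = insert a {l\<in>{a+2..b}. even l}"
    using assms by (auto; presburger)
  then have "prod_ev a b f = f a * prod_ev (a+2) b f" unfolding prod_ev_def by simp
  also have "prod_ev (a+2) b f = prod_ev (Suc (a+1)) (Suc (b-1)) f" using assms by simp
  finally show ?thesis by (simp only: prod_od_Suc_shift)
qed

lemma card_odd_atLeastAtMost: "card {l\<in>{a..b}. odd l} = (b+1) div 2 - a div 2"
proof -
  have "{l\<in>{a..b}. odd l} = (\<lambda>k. 2*k+1) ` {a div 2..<(b+1) div 2}"
  proof (intro set_eqI iffI)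
    fix l assume "l \<in> {l\<in>{a..b}. odd l}"
    then show "l \<in> (\<lambda>k. 2*k+1) ` {a div 2..<(b+1) div 2}"
      by (auto simp: image_iff elim!: oddE intro!: bexI[of _ "l div 2"])
  qed auto
  then show ?thesis by (simp add: card_image inj_on_def)
qed

lemma card_even_atLeastAtMost: "card {l\<in>{a..b}. even l} = (b+2) div 2 - (a+1) div 2"
proof -
  have "{l\<in>{a..b}. even l} = (\<lambda>k. 2*k) ` {(a+1) div 2..<(b+2) div 2}"
  proof (intro set_eqI iffI)
    fix l assume "l \<in> {l\<in>{a..b}. even l}"
    then show "l \<in> (\<lambda>k. 2*k) ` {(a+1) div 2..<(b+2) div 2}"
      by (auto simp: image_iff elim!: evenE intro!: bexI[of _ "l div 2"])
  qed auto
  then show ?thesis by (simp add: card_image inj_on_def)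
qed

lemma prod_ev_constant: "prod_ev a b (\<lambda>_. c) = c ^ ((b+2) div 2 - (a+1) div 2)"
  unfolding prod_ev_def prod_constant by (rule arg_cong[OF card_even_atLeastAtMost])

lemma prod_od_constant: "prod_od a b (\<lambda>_. c) = c ^ ((b+1) div 2 - a div 2)"
  unfolding prod_od_def prod_constant by (rule arg_cong[OF card_odd_atLeastAtMost])

lemma prod_od_snoc_if:
  assumes "even n" "2 \<le> n"
  shows "prod_od a (n+1) f = prod_od a (n-1) f * (if a \<le> n+1 then f (n+1) else 1)"
proof (cases "a \<le> n+1")
  case True
  then show ?thesis using prod_od_snoc_odd[of "n-1" a f] assms by simp
qed (simp add: prod_od_empty)

lemma prod_prod_od_snoc:
  assumes "finite K" "even n" "2 \<le> n" "2 \<le> c"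
  shows "(\<Prod>k\<in>K. prod_od (k+c) (n+1) (g k))
       = (\<Prod>k\<in>{k\<in>K. k \<le> n-3}. prod_od (k+c) (n-1) (g k)) * (\<Prod>k\<in>{k\<in>K. k + c \<le> n+1}. g k (n+1))"
proof -
  have "(\<Prod>k\<in>K. prod_od (k+c) (n+1) (g k))
      = (\<Prod>k\<in>K. prod_od (k+c) (n-1) (g k)) * (\<Prod>k\<in>K. if k+c \<le> n+1 then g k (n+1) else 1)"
    unfolding prod.distrib[symmetric] using prod_od_snoc_if[OF assms(2,3)] by (intro prod.cong) auto
  also have "(\<Prod>k\<in>K. prod_od (k+c) (n-1) (g k)) = (\<Prod>k\<in>{k\<in>K. k \<le> n-3}. prod_od (k+c) (n-1) (g k))"
    using assms by (intro prod.mono_neutral_right) (auto intro!: prod_od_empty)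
  also have "(\<Prod>k\<in>K. if k+c \<le> n+1 then g k (n+1) else 1) = (\<Prod>k\<in>{k\<in>K. k + c \<le> n+1}. g k (n+1))"
    using assms(1) by (rule prod.inter_filter[symmetric])
  finally show ?thesis .
qed

lemma prod_nested_prod_od_snoc:
  assumes "even n" "2 \<le> n" "2 \<le> c" "c \<le> n+1"
  shows "(\<Prod>k\<in>{m..n-1}. prod_od (k+c) (n+1) (g k))
       = (\<Prod>k\<in>{m..n-3}. prod_od (k+c) (n-1) (g k)) * (\<Prod>k\<in>{m..n+1-c}. g k (n+1))"
proof -
  have "{k\<in>{m..n-1}. k \<le> n-3} = {m..n-3}" "{k\<in>{m..n-1}. k + c \<le> n+1} = {m..n+1-c}"
    using assms by auto
  then show ?thesis using prod_prod_od_snoc[of "{m..n-1}" n c g] assms by simp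
qed

lemma prod_ev_nested_prod_od_snoc:
  assumes "even n" "2 \<le> n" "2 \<le> c" "c \<le> n+1"
  shows "prod_ev m (n-1) (\<lambda>k. prod_od (k+c) (n+1) (g k))
       = prod_ev m (n-3) (\<lambda>k. prod_od (k+c) (n-1) (g k)) * prod_ev m (n+1-c) (\<lambda>k. g k (n+1))"
proof -
  have "{k\<in>{l\<in>{m..n-1}. even l}. k \<le> n-3} = {l\<in>{m..n-3}. even l}"
    "{k\<in>{l\<in>{m..n-1}. even l}. k + c \<le> n+1} = {l\<in>{m..n+1-c}. even l}"
    using assms by auto
  then show ?thesis
    using prod_prod_od_snoc[of "{l\<in>{m..n-1}. even l}" n c g] assms unfolding prod_ev_def by simp
qed

lemma prod_od_nested_prod_od_snoc:
  assumes "even n" "2 \<le> n" "2 \<le> c" "c \<le> n+1"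
  shows "prod_od m (n-1) (\<lambda>k. prod_od (k+c) (n+1) (g k))
       = prod_od m (n-3) (\<lambda>k. prod_od (k+c) (n-1) (g k)) * prod_od m (n+1-c) (\<lambda>k. g k (n+1))"
proof -
  have "{k\<in>{l\<in>{m..n-1}. odd l}. k \<le> n-3} = {l\<in>{m..n-3}. odd l}"
    "{k\<in>{l\<in>{m..n-1}. odd l}. k + c \<le> n+1} = {l\<in>{m..n+1-c}. odd l}"
    using assms by auto
  then show ?thesis
    using prod_prod_od_snoc[of "{l\<in>{m..n-1}. odd l}" n c g] assms unfolding prod_od_def by simp
qed

section \<open>Products over pairs of vertices\<close>

definition pair_prod :: "(nat \<Rightarrow> nat \<Rightarrow> real) \<Rightarrow> nat set \<Rightarrow> real" where
  "pair_prod d X = (\<Prod>i\<in>X. \<Prod>j\<in>{j\<in>X. i < j}. d i j)"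

lemma pair_prod_singleton: "pair_prod d {a} = 1"
proof -
  have no_successor: "{j. j = a \<and> a < j} = {}" by auto
  show ?thesis by (simp add: pair_prod_def no_successor)
qed

lemma pair_prod_insert_greater:
  assumes "finite X" "\<forall>i\<in>X. i < a"
  shows "pair_prod d (insert a X) = pair_prod d X * (\<Prod>i\<in>X. d i a)"
proof -
  have a: "a \<notin> X" using assms by auto
  have "pair_prod d (insert a X)
      = (\<Prod>j\<in>{j\<in>insert a X. a < j}. d a j) * (\<Prod>i\<in>X. \<Prod>j\<in>{j\<in>insert a X. i < j}. d i j)"
    unfolding pair_prod_def using assms(1) a by simp
  also have "{j\<in>insert a X. a < j} = {}" using assms by auto
  also have "(\<Prod>i\<in>X. \<Prod>j\<in>{j\<in>insert a X. i < j}. d i j) = (\<Prod>i\<in>X. (\<Prod>j\<in>{j\<in>X. i < j}. d i j) * d i a)"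
  proof (rule prod.cong)
    fix i assume "i \<in> X"
    then have "{j\<in>insert a X. i < j} = insert a {j\<in>X. i < j}" using assms by auto
    then show "(\<Prod>j\<in>{j\<in>insert a X. i < j}. d i j) = (\<Prod>j\<in>{j\<in>X. i < j}. d i j) * d i a"
      using assms(1) a by (simp add: mult.commute)
  qed simp
  finally show ?thesis unfolding pair_prod_def by (simp add: prod.distrib)
qed

lemma pair_prod_add_two:
  assumes "n+1 \<notin> M" "n+2 \<notin> M"
  shows "pair_prod d ({1..n+2} - M)
       = pair_prod d ({1..n} - M) * (\<Prod>i\<in>{1..n}-M. d i (n+1) * d i (n+2)) * d (n+1) (n+2)"
proof -
  let ?X = "{1..n} - M"
  have "{1..n+2} - M = insert (n+2) (insert (n+1) ?X)" using assms by auto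
  then have "pair_prod d ({1..n+2} - M) = pair_prod d (insert (n+1) ?X) * (\<Prod>i\<in>insert (n+1) ?X. d i (n+2))"
    by (simp add: pair_prod_insert_greater)
  also have "pair_prod d (insert (n+1) ?X) = pair_prod d ?X * (\<Prod>i\<in>?X. d i (n+1))"
    by (rule pair_prod_insert_greater) auto
  finally show ?thesis by (simp add: prod.distrib)
qed

lemma pair_prod_induct_two:
  fixes F :: "nat \<Rightarrow> real"
  assumes "n\<^sub>0 \<le> n" "even (n - n\<^sub>0)" "\<forall>j\<in>M. j \<le> n\<^sub>0"
    and base: "pair_prod d ({1..n\<^sub>0} - M) = F n\<^sub>0"
    and step: "\<And>k. n\<^sub>0 \<le> k \<Longrightarrow> even (k - n\<^sub>0) \<Longrightarrow> k + 2 \<le> n \<Longrightarrow>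
                 F (k+2) = F k * (\<Prod>i\<in>{1..k} - M. d i (k+1) * d i (k+2)) * d (k+1) (k+2)"
  shows "pair_prod d ({1..n} - M) = F n"
proof -
  obtain t where n: "n = n\<^sub>0 + 2*t" using assms(1,2) by (metis evenE le_add_diff_inverse)
  have "n\<^sub>0 + 2*t \<le> n \<Longrightarrow> pair_prod d ({1..n\<^sub>0 + 2*t} - M) = F (n\<^sub>0 + 2*t)" for t
  proof (induction t)
    case (Suc t)
    let ?k = "n\<^sub>0 + 2*t"
    have "pair_prod d ({1..?k+2} - M)
        = pair_prod d ({1..?k} - M) * (\<Prod>i\<in>{1..?k}-M. d i (?k+1) * d i (?k+2)) * d (?k+1) (?k+2)"
      using assms(3) by (intro pair_prod_add_two) auto
    also have "\<dots> = F (?k+2)" using Suc step[of ?k] by simp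
    finally show ?case by (simp add: add.assoc)
  qed (use base in simp)
  then show ?thesis using n by simp
qed

lemma delta_m_eq_pair_prod: "delta_m A n m = pair_prod (dl A) ({1..n} - {m})"
proof -
  have "(\<Prod>j\<in>{j\<in>{1..n}-{m}. i < j}. dl A i j) = 1" if "i \<in> {1..n} - {m} - ({1..n-1} - {m})" for i
  proof -
    have "{j\<in>{1..n}-{m}. i < j} = {}" using that by auto
    then show ?thesis by (simp only: prod.empty)
  qed
  then have "pair_prod (dl A) ({1..n} - {m}) = (\<Prod>i\<in>{1..n-1}-{m}. \<Prod>j\<in>{j\<in>{1..n}-{m}. i < j}. dl A i j)"
    unfolding pair_prod_def by (intro prod.mono_neutral_right) auto
  also have "\<dots> = delta_m A n m"
    unfolding delta_m_def by (intro prod.cong) (auto intro: arg_cong[where f = "\<lambda>J. prod _ J"])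
  finally show ?thesis by simp
qed

lemma pair_prod_move_gap:
  assumes "1 \<le> m"
  shows "pair_prod d ({1..m+3} - {m+2}) = pair_prod d ({1..m+1} - {m})
     * ((\<Prod>i\<in>{1..m-1}. d i m * d i (m+3)) * d m (m+1) * d m (m+3) * d (m+1) (m+3))"
proof -
  let ?X = "{1..m-1}"
  have "{1..m+3} - {m+2} = insert (m+3) (insert (m+1) (insert m ?X))"
    "{1..m+1} - {m} = insert (m+1) ?X" using assms by auto
  moreover have "pair_prod d (insert (m+3) (insert (m+1) (insert m ?X)))
      = pair_prod d (insert (m+1) (insert m ?X)) * (\<Prod>i\<in>insert (m+1) (insert m ?X). d i (m+3))"
    "pair_prod d (insert (m+1) (insert m ?X)) = pair_prod d (insert m ?X) * (\<Prod>i\<in>insert m ?X. d i (m+1))"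
    "pair_prod d (insert m ?X) = pair_prod d ?X * (\<Prod>i\<in>?X. d i m)"
    "pair_prod d (insert (m+1) ?X) = pair_prod d ?X * (\<Prod>i\<in>?X. d i (m+1))"
    by (rule pair_prod_insert_greater; auto)+
  moreover have "m \<notin> ?X" "m+1 \<notin> insert m ?X" using assms by auto
  ultimately show ?thesis by (simp add: prod.distrib mult_ac)
qed

section \<open>Adding two consecutive vertices\<close>

context inscribed_chords
begin

lemma S_eq_chords: "1 \<le> p \<Longrightarrow> p < q \<Longrightarrow> q < r \<Longrightarrow> r \<le> N \<Longrightarrow> S p q r = d p q * d q r * d p r / R"
  using S_mult_R[of p q r] R_pos by (simp add: field_simps)

lemma prod_S_new_pair:
  assumes "finite I" "\<forall>i\<in>I. 1 \<le> i \<and> i < a" "a + 1 \<le> N" "card I = 2*t + 1"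
  shows "(\<Prod>i\<in>I. S i a (a+1) * R) * (1 / x a (a+1))^t = (\<Prod>i\<in>I. d i a * d i (a+1)) * d a (a+1)"
proof -
  let ?D = "d a (a+1)"
  have "(\<Prod>i\<in>I. S i a (a+1) * R) = (\<Prod>i\<in>I. (d i a * d i (a+1)) * ?D)"
    using S_mult_R assms(2,3) by (intro prod.cong) (auto simp: mult_ac)
  also have "\<dots> = (\<Prod>i\<in>I. d i a * d i (a+1)) * ?D^(2*t) * ?D"
    using assms(4) by (simp add: prod.distrib)
  moreover obtain i where "i \<in> I" using assms(4) by fastforce
  then have "1 \<le> a" using assms(2) by auto
  then have "x a (a+1) = ?D^2" "?D > 0" using x_consecutive d_pos[of a "a+1"] assms by auto
  ultimately show ?thesis by (simp add: power_mult power_one_over)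
qed

lemma prod_S_new_pair_remove:
  assumes "even n" "m \<in> {1..n}" "n + 2 \<le> N"
  shows "(\<Prod>i\<in>{1..n}-{m}. S i (n+1) (n+2) * R) * (1 / x (n+1) (n+2))^((n-2) div 2)
       = (\<Prod>i\<in>{1..n}-{m}. d i (n+1) * d i (n+2)) * d (n+1) (n+2)"
proof -
  have "1 \<le> n" using assms(2) by simp
  then have "2 \<le> n" using assms(1) by presburger
  then have "card ({1..n}-{m}) = 2 * ((n-2) div 2) + 1" using assms by auto
  then show ?thesis using prod_S_new_pair[of "{1..n}-{m}" "n+1"] assms by simp
qed

end

section \<open>Case (i): \<open>m\<close> even\<close>

definition delta_even_formula ::
    "(nat \<Rightarrow> nat \<Rightarrow> nat \<Rightarrow> real) \<Rightarrow> (nat \<Rightarrow> nat \<Rightarrow> real) \<Rightarrow> real \<Rightarrow> nat \<Rightarrow> nat \<Rightarrow> real" where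
  "delta_even_formula S x R n m =
        R ^ ((n - 2) div 2)
      * (\<Prod>k\<in>{1..m-1}. prod_ev (k+1) (m-1) (\<lambda>l. S k l (l+1))
                         * prod_od (m+1) (n-1) (\<lambda>l. S k l (l+1)))
      * (\<Prod>k\<in>{m..n-3}. prod_od (k+2) (n-1) (\<lambda>l. S (k+1) l (l+1)))
      * prod_ev 2 (m-1) (\<lambda>k. prod_ev (k+1) (m-1) (\<lambda>l. R^2 / x l (l+1)))
      * prod_ev m (n-3) (\<lambda>k. prod_od (k+2) (n-1) (\<lambda>l. R^2 / x l (l+1)))
      * prod_od (m+1) (n-1) (\<lambda>l. R^(m-2) / x l (l+1) ^ ((m-2) div 2))"

lemma delta_even_formula_diag:
  "2 \<le> m \<Longrightarrow> delta_even_formula S x R m m = R ^ ((m-2) div 2)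
     * (\<Prod>k\<in>{1..m-1}. prod_ev (k+1) (m-1) (\<lambda>l. S k l (l+1)))
     * prod_ev 2 (m-1) (\<lambda>k. prod_ev (k+1) (m-1) (\<lambda>l. R^2 / x l (l+1)))"
  unfolding delta_even_formula_def by (simp add: prod_od_empty prod_ev_empty)

lemma power_regroup:
  fixes R X P :: real
  shows "R * P * (R^2 / X)^t * (R^(2*s) / X^s) = (P * R^(2*s + 2*t + 1)) * (1 / X)^(s + t)"
  by (simp add: power_add power_divide power_one_over mult_ac power_mult[symmetric])

lemma delta_even_formula_diag_add_two_quotient:
  assumes "even m" "2 \<le> m"
  shows "delta_even_formula S x R (m+2) (m+2) = delta_even_formula S x R m m
     * (R * (\<Prod>k\<in>{1..m-1}. S k m (m+1)) * (R^2 / x m (m+1))^((m-2) div 2))"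
proof -
  have odd_m1: "odd (m-1)" "m - 1 + 2 = m + 1" using assms by auto
  have new_S: "(\<Prod>k\<in>{1..m+1}. prod_ev (k+1) (m+1) (\<lambda>l. S k l (l+1)))
      = (\<Prod>k\<in>{1..m-1}. prod_ev (k+1) (m-1) (\<lambda>l. S k l (l+1))) * (\<Prod>k\<in>{1..m-1}. S k m (m+1))"
  proof -
    have "prod_ev (i+1) (m+1) (\<lambda>l. S i l (l+1)) = 1" if "i \<in> {1..m+1} - {1..m-1}" for i
    proof -
      have "i = m \<or> i = m + 1" using that by auto
      then show ?thesis using assms by (auto simp: prod_ev_odd_singleton prod_ev_empty)
    qed
    then have "(\<Prod>k\<in>{1..m+1}. prod_ev (k+1) (m+1) (\<lambda>l. S k l (l+1)))
        = (\<Prod>k\<in>{1..m-1}. prod_ev (k+1) (m+1) (\<lambda>l. S k l (l+1)))"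
      by (intro prod.mono_neutral_right) auto
    also have "\<dots> = (\<Prod>k\<in>{1..m-1}. prod_ev (k+1) (m-1) (\<lambda>l. S k l (l+1)) * S k m (m+1))"
      using prod_ev_snoc_odd[OF odd_m1(1)] odd_m1 by (intro prod.cong) auto
    finally show ?thesis by (simp add: prod.distrib)
  qed
  have new_x: "prod_ev 2 (m+1) (\<lambda>k. prod_ev (k+1) (m+1) (\<lambda>l. R^2 / x l (l+1)))
      = prod_ev 2 (m-1) (\<lambda>k. prod_ev (k+1) (m-1) (\<lambda>l. R^2 / x l (l+1))) * (R^2 / x m (m+1))^((m-2) div 2)"
  proof -
    have "prod_ev 2 (m+1) (\<lambda>k. prod_ev (k+1) (m+1) (\<lambda>l. R^2 / x l (l+1)))
        = prod_ev 2 (m-1) (\<lambda>k. prod_ev (k+1) (m+1) (\<lambda>l. R^2 / x l (l+1)))"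
      using prod_ev_snoc_odd[OF odd_m1(1), of 2] odd_m1 assms by (simp add: prod_ev_odd_singleton)
    also have "\<dots> = prod_ev 2 (m-1) (\<lambda>k. prod_ev (k+1) (m-1) (\<lambda>l. R^2 / x l (l+1)) * (R^2 / x m (m+1)))"
      unfolding prod_ev_def[of 2] using prod_ev_snoc_odd[OF odd_m1(1)] odd_m1 by (intro prod.cong) auto
    also have "\<dots> = prod_ev 2 (m-1) (\<lambda>k. prod_ev (k+1) (m-1) (\<lambda>l. R^2 / x l (l+1)))
        * prod_ev 2 (m-1) (\<lambda>k. R^2 / x m (m+1))"
      by (rule prod_ev_distrib)
    also have "prod_ev 2 (m-1) (\<lambda>k. R^2 / x m (m+1)) = (R^2 / x m (m+1))^((m-2) div 2)"
      using assms by (auto simp: prod_ev_constant elim!: even_ge_2E)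
    finally show ?thesis .
  qed
  have idx: "m + 2 - 1 = m + 1" "R ^ ((m + 2 - 2) div 2) = R ^ ((m-2) div 2) * R"
    using assms by (auto elim!: even_ge_2E)
  show ?thesis
    using delta_even_formula_diag[of m S x R] delta_even_formula_diag[of "m+2" S x R] assms
    unfolding idx new_S new_x by (simp only: mult_ac)
qed

lemma delta_even_formula_add_two_quotient:
  assumes "even n" "even m" "2 \<le> m" "m \<le> n"
  shows "delta_even_formula S x R (n+2) m = delta_even_formula S x R n m
      * (R * (\<Prod>i\<in>{1..n}-{m}. S i (n+1) (n+2)) * (R^2 / x (n+1) (n+2))^((n-m) div 2)
         * (R^(m-2) / x (n+1) (n+2) ^ ((m-2) div 2)))"
proof -
  have odd_n1: "odd (n-1)" "n - 1 + 2 = n + 1" using assms by auto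
  have idx: "n + 2 - 3 = n - 1" "n + 2 - 1 = n + 1" "n + 1 + 1 = n + 2"
    "R ^ ((n + 2 - 2) div 2) = R ^ ((n-2) div 2) * R"
    using assms by (auto elim!: even_ge_2E)
  have snoc: "prod_od (m+1) (n+1) f = prod_od (m+1) (n-1) f * f (n+1)" for f
    using prod_od_snoc_odd[OF odd_n1(1), of "m+1" f] odd_n1 assms by simp
  have new_S_left: "(\<Prod>k\<in>{1..m-1}. prod_ev (k+1) (m-1) (\<lambda>l. S k l (l+1)) * prod_od (m+1) (n+1) (\<lambda>l. S k l (l+1)))
     = (\<Prod>k\<in>{1..m-1}. prod_ev (k+1) (m-1) (\<lambda>l. S k l (l+1)) * prod_od (m+1) (n-1) (\<lambda>l. S k l (l+1)))
       * (\<Prod>k\<in>{1..m-1}. S k (n+1) (n+2))"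
    unfolding snoc by (simp add: prod.distrib mult.assoc)
  have new_S_right: "(\<Prod>k\<in>{m..n-1}. prod_od (k+2) (n+1) (\<lambda>l. S (k+1) l (l+1)))
     = (\<Prod>k\<in>{m..n-3}. prod_od (k+2) (n-1) (\<lambda>l. S (k+1) l (l+1))) * (\<Prod>k\<in>{m..n-1}. S (k+1) (n+1) (n+2))"
    using prod_nested_prod_od_snoc[of n 2] assms by simp
  have new_x: "prod_ev m (n-1) (\<lambda>k. prod_od (k+2) (n+1) (\<lambda>l. R^2 / x l (l+1)))
     = prod_ev m (n-3) (\<lambda>k. prod_od (k+2) (n-1) (\<lambda>l. R^2 / x l (l+1))) * (R^2 / x (n+1) (n+2))^((n-m) div 2)"
  proof -
    have "(n - 1 + 2) div 2 - (m + 1) div 2 = (n - m) div 2"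
      using assms by (auto elim!: evenE simp: diff_mult_distrib2[symmetric])
    then show ?thesis using prod_ev_nested_prod_od_snoc[of n 2] assms by (simp add: prod_ev_constant)
  qed
  have split: "(\<Prod>k\<in>{1..m-1}. S k (n+1) (n+2)) * (\<Prod>k\<in>{m..n-1}. S (k+1) (n+1) (n+2))
      = (\<Prod>i\<in>{1..n}-{m}. S i (n+1) (n+2))"
  proof -
    have "(\<Prod>k\<in>{m..n-1}. S (k+1) (n+1) (n+2)) = (\<Prod>i\<in>{m+1..n}. S i (n+1) (n+2))"
      using prod.shift_bounds_cl_Suc_ivl[of "\<lambda>i. S i (n+1) (n+2)" m "n-1"] assms by simp
    moreover have "{1..n}-{m} = {1..m-1} \<union> {m+1..n}" using assms by auto
    ultimately show ?thesis by (simp add: prod.union_disjoint)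
  qed
  show ?thesis
    unfolding delta_even_formula_def idx new_S_left new_S_right new_x split[symmetric]
      snoc[of "\<lambda>l. R^(m-2) / x l (l+1) ^ ((m-2) div 2)"]
    by (simp only: mult_ac)
qed

context inscribed_chords
begin

lemma delta_even_formula_diag_add_two:
  assumes "even m" "2 \<le> m" "m + 2 \<le> N"
  shows "delta_even_formula S x R (m+2) (m+2)
       = delta_even_formula S x R m m * (\<Prod>i\<in>{1..m-1}. d i m * d i (m+1)) * d m (m+1)"
proof -
  obtain s where s: "m = 2*s + 2" using assms(1,2) by (rule even_ge_2E)
  have "R * (\<Prod>k\<in>{1..m-1}. S k m (m+1)) * (R^2 / x m (m+1))^s
      = (\<Prod>k\<in>{1..m-1}. S k m (m+1) * R) * (1 / x m (m+1))^s"
    using power_regroup[of R "\<Prod>k\<in>{1..m-1}. S k m (m+1)" "x m (m+1)" s 0] s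
    by (simp add: prod.distrib)
  also have "\<dots> = (\<Prod>i\<in>{1..m-1}. d i m * d i (m+1)) * d m (m+1)"
    using assms s by (intro prod_S_new_pair) auto
  finally show ?thesis
    using delta_even_formula_diag_add_two_quotient[OF assms(1,2), of S x R] s by (simp add: mult.assoc)
qed

lemma delta_even_formula_add_two:
  assumes "even n" "even m" "2 \<le> m" "m \<le> n" "n + 2 \<le> N"
  shows "delta_even_formula S x R (n+2) m
       = delta_even_formula S x R n m * (\<Prod>i\<in>{1..n}-{m}. d i (n+1) * d i (n+2)) * d (n+1) (n+2)"
proof -
  obtain s where s: "m = 2*s + 2" using assms(2,3) by (rule even_ge_2E)
  obtain t where t: "n = m + 2*t"
  proof -
    have "even (n - m)" using assms(1,2) by simp
    then obtain t where "n - m = 2*t" by (rule evenE)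
    then show ?thesis using assms(4) that[of t] by simp
  qed
  have "R * (\<Prod>i\<in>{1..n}-{m}. S i (n+1) (n+2)) * (R^2 / x (n+1) (n+2))^t * (R^(2*s) / x (n+1) (n+2) ^ s)
      = (\<Prod>i\<in>{1..n}-{m}. S i (n+1) (n+2) * R) * (1 / x (n+1) (n+2))^((n-2) div 2)"
    using power_regroup[of R "\<Prod>i\<in>{1..n}-{m}. S i (n+1) (n+2)" "x (n+1) (n+2)" t s] s t assms
    by (simp add: prod.distrib)
  also have "\<dots> = (\<Prod>i\<in>{1..n}-{m}. d i (n+1) * d i (n+2)) * d (n+1) (n+2)"
    using assms by (intro prod_S_new_pair_remove) auto
  finally show ?thesis
    using delta_even_formula_add_two_quotient[OF assms(1-4), of S x R] s t by (simp add: mult.assoc)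
qed

lemma pair_prod_delta_even:
  assumes "even n" "even m" "2 \<le> m" "m \<le> n" "n \<le> N"
  shows "pair_prod d ({1..n} - {m}) = delta_even_formula S x R n m"
proof (rule pair_prod_induct_two)
  show "pair_prod d ({1..m} - {m}) = delta_even_formula S x R m m"
  proof -
    have "pair_prod d ({1..m-1} - {}) = delta_even_formula S x R (m-1+1) (m-1+1)"
    proof (rule pair_prod_induct_two[where n\<^sub>0 = 1])
      show "pair_prod d ({1..1} - {}) = delta_even_formula S x R (1+1) (1+1)"
        by (simp add: pair_prod_singleton delta_even_formula_def prod_ev_empty prod_od_empty)
      show "delta_even_formula S x R (k+2+1) (k+2+1)
          = delta_even_formula S x R (k+1) (k+1) * (\<Prod>i\<in>{1..k}-{}. d i (k+1) * d i (k+2)) * d (k+1) (k+2)"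
        if "1 \<le> k" "even (k-1)" "k + 2 \<le> m - 1" for k
        using delta_even_formula_diag_add_two[of "k+1"] that assms by (simp add: add.commute)
    qed (use assms in auto)
    moreover have "{1..m} - {m} = {1..m-1} - {}" by auto
    ultimately show ?thesis using assms by simp
  qed
  show "delta_even_formula S x R (k+2) m
      = delta_even_formula S x R k m * (\<Prod>i\<in>{1..k}-{m}. d i (k+1) * d i (k+2)) * d (k+1) (k+2)"
    if "m \<le> k" "even (k - m)" "k + 2 \<le> n" for k
    using delta_even_formula_add_two that assms by simp
qed (use assms in auto)

end

section \<open>Cases (ii) and (iii): \<open>m = 1\<close> and \<open>m = 3\<close>\<close>

definition delta_one_formula ::
    "(nat \<Rightarrow> nat \<Rightarrow> nat \<Rightarrow> real) \<Rightarrow> (nat \<Rightarrow> nat \<Rightarrow> real) \<Rightarrow> real \<Rightarrow> nat \<Rightarrow> real" where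
  "delta_one_formula S x R n =
        (\<Prod>k\<in>{1..n-3}. prod_od (k+2) (n-1) (\<lambda>l. S (k+1) l (l+1) * R))
      * prod_ev 2 (n-3) (\<lambda>k. prod_od (k+2) (n-1) (\<lambda>l. 1 / x l (l+1)))"

definition delta_three_formula ::
    "(nat \<Rightarrow> nat \<Rightarrow> nat \<Rightarrow> real) \<Rightarrow> (nat \<Rightarrow> nat \<Rightarrow> real) \<Rightarrow> real \<Rightarrow> nat \<Rightarrow> real" where
  "delta_three_formula S x R n =
        S 1 2 4 * R
      * prod_od 5 (n-1) (\<lambda>l. S 1 l (l+1) * S 2 l (l+1) * R^2)
      * (\<Prod>k\<in>{3..n-3}. prod_od (k+2) (n-1) (\<lambda>l. S (k+1) l (l+1) * R))
      * prod_od 3 (n-3) (\<lambda>k. prod_od (k+2) (n-1) (\<lambda>l. 1 / x l (l+1)))"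

context inscribed_chords
begin

lemma delta_one_formula_add_two:
  assumes "even n" "2 \<le> n" "n + 2 \<le> N"
  shows "delta_one_formula S x R (n+2)
       = delta_one_formula S x R n * (\<Prod>i\<in>{1..n}-{1}. d i (n+1) * d i (n+2)) * d (n+1) (n+2)"
proof -
  have idx: "n + 2 - 3 = n - 1" "n + 2 - 1 = n + 1" "n + 1 + 1 = n + 2" using assms by auto
  have new_S: "(\<Prod>k\<in>{1..n-1}. prod_od (k+2) (n+1) (\<lambda>l. S (k+1) l (l+1) * R))
      = (\<Prod>k\<in>{1..n-3}. prod_od (k+2) (n-1) (\<lambda>l. S (k+1) l (l+1) * R))
        * (\<Prod>k\<in>{1..n-1}. S (k+1) (n+1) (n+2) * R)"
    using prod_nested_prod_od_snoc[of n 2] assms by simp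
  have new_x: "prod_ev 2 (n-1) (\<lambda>k. prod_od (k+2) (n+1) (\<lambda>l. 1 / x l (l+1)))
      = prod_ev 2 (n-3) (\<lambda>k. prod_od (k+2) (n-1) (\<lambda>l. 1 / x l (l+1)))
        * prod_ev 2 (n-1) (\<lambda>k. 1 / x (n+1) (n+2))"
    using prod_ev_nested_prod_od_snoc[of n 2] assms by simp
  have "delta_one_formula S x R (n+2) = delta_one_formula S x R n
      * ((\<Prod>k\<in>{1..n-1}. S (k+1) (n+1) (n+2) * R) * prod_ev 2 (n-1) (\<lambda>k. 1 / x (n+1) (n+2)))"
    unfolding delta_one_formula_def idx new_S new_x by (simp only: mult_ac)
  also have "(\<Prod>k\<in>{1..n-1}. S (k+1) (n+1) (n+2) * R) = (\<Prod>i\<in>{1..n}-{1}. S i (n+1) (n+2) * R)"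
  proof -
    have "{1..n}-{1} = {Suc 1..Suc (n-1)}" using assms by auto
    then show ?thesis by (simp only: prod.shift_bounds_cl_Suc_ivl) simp
  qed
  also have "prod_ev 2 (n-1) (\<lambda>k. 1 / x (n+1) (n+2)) = (1 / x (n+1) (n+2))^((n-2) div 2)"
    using assms(1,2) by (auto simp: prod_ev_constant elim!: even_ge_2E)
  also have "(\<Prod>i\<in>{1..n}-{1}. S i (n+1) (n+2) * R) * (1 / x (n+1) (n+2))^((n-2) div 2)
      = (\<Prod>i\<in>{1..n}-{1}. d i (n+1) * d i (n+2)) * d (n+1) (n+2)"
    using assms by (intro prod_S_new_pair_remove) auto
  finally show ?thesis by (simp add: mult.assoc)
qed

lemma delta_three_formula_add_two:
  assumes "even n" "4 \<le> n" "n + 2 \<le> N"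
  shows "delta_three_formula S x R (n+2)
       = delta_three_formula S x R n * (\<Prod>i\<in>{1..n}-{3}. d i (n+1) * d i (n+2)) * d (n+1) (n+2)"
proof -
  have n2: "2 \<le> n" using assms by simp
  have idx: "n + 2 - 3 = n - 1" "n + 2 - 1 = n + 1" "n + 1 + 1 = n + 2" using assms by auto
  have new_12: "prod_od 5 (n+1) (\<lambda>l. S 1 l (l+1) * S 2 l (l+1) * R^2)
      = prod_od 5 (n-1) (\<lambda>l. S 1 l (l+1) * S 2 l (l+1) * R^2) * (S 1 (n+1) (n+2) * S 2 (n+1) (n+2) * R^2)"
    using prod_od_snoc_odd[of "n-1" 5] assms by simp
  have new_S: "(\<Prod>k\<in>{3..n-1}. prod_od (k+2) (n+1) (\<lambda>l. S (k+1) l (l+1) * R))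
      = (\<Prod>k\<in>{3..n-3}. prod_od (k+2) (n-1) (\<lambda>l. S (k+1) l (l+1) * R))
        * (\<Prod>k\<in>{3..n-1}. S (k+1) (n+1) (n+2) * R)"
    using prod_nested_prod_od_snoc[of n 2] assms by simp
  have new_x: "prod_od 3 (n-1) (\<lambda>k. prod_od (k+2) (n+1) (\<lambda>l. 1 / x l (l+1)))
      = prod_od 3 (n-3) (\<lambda>k. prod_od (k+2) (n-1) (\<lambda>l. 1 / x l (l+1)))
        * prod_od 3 (n-1) (\<lambda>k. 1 / x (n+1) (n+2))"
    using prod_od_nested_prod_od_snoc[of n 2] assms by simp
  have "delta_three_formula S x R (n+2) = delta_three_formula S x R n
      * ((S 1 (n+1) (n+2) * S 2 (n+1) (n+2) * R^2) * (\<Prod>k\<in>{3..n-1}. S (k+1) (n+1) (n+2) * R)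
         * prod_od 3 (n-1) (\<lambda>k. 1 / x (n+1) (n+2)))"
    unfolding delta_three_formula_def idx new_12 new_S new_x by (simp only: mult_ac)
  also have "(S 1 (n+1) (n+2) * S 2 (n+1) (n+2) * R^2) * (\<Prod>k\<in>{3..n-1}. S (k+1) (n+1) (n+2) * R)
      = (\<Prod>i\<in>{1..n}-{3}. S i (n+1) (n+2) * R)"
  proof -
    have "{4..n} = {Suc 3..Suc (n-1)}" using assms by auto
    then have "(\<Prod>k\<in>{3..n-1}. S (k+1) (n+1) (n+2) * R) = (\<Prod>i\<in>{4..n}. S i (n+1) (n+2) * R)"
      by (simp only: prod.shift_bounds_cl_Suc_ivl) simp
    moreover have "{1..n}-{3} = insert 1 (insert 2 {4..n})" using assms by auto
    ultimately show ?thesis by (simp add: power2_eq_square mult_ac)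
  qed
  also have "prod_od 3 (n-1) (\<lambda>k. 1 / x (n+1) (n+2)) = (1 / x (n+1) (n+2))^((n-2) div 2)"
    using assms(1) n2 by (auto simp: prod_od_constant elim!: even_ge_2E)
  also have "(\<Prod>i\<in>{1..n}-{3}. S i (n+1) (n+2) * R) * (1 / x (n+1) (n+2))^((n-2) div 2)
      = (\<Prod>i\<in>{1..n}-{3}. d i (n+1) * d i (n+2)) * d (n+1) (n+2)"
    using assms by (intro prod_S_new_pair_remove) auto
  finally show ?thesis by (simp add: mult.assoc)
qed

lemma pair_prod_delta_one:
  assumes "even n" "2 \<le> n" "n \<le> N"
  shows "pair_prod d ({1..n} - {1}) = delta_one_formula S x R n"
proof (rule pair_prod_induct_two[where n\<^sub>0 = 2])
  have "{1..2} - {1} = {2::nat}" by auto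
  then show "pair_prod d ({1..2} - {1}) = delta_one_formula S x R 2"
    by (simp add: pair_prod_singleton delta_one_formula_def prod_ev_empty prod_od_empty)
  show "delta_one_formula S x R (k+2)
      = delta_one_formula S x R k * (\<Prod>i\<in>{1..k}-{1}. d i (k+1) * d i (k+2)) * d (k+1) (k+2)"
    if "2 \<le> k" "even (k - 2)" "k + 2 \<le> n" for k
    using delta_one_formula_add_two that assms by simp
qed (use assms in auto)

lemma pair_prod_delta_three:
  assumes "even n" "4 \<le> n" "n \<le> N"
  shows "pair_prod d ({1..n} - {3}) = delta_three_formula S x R n"
proof (rule pair_prod_induct_two[where n\<^sub>0 = 4])
  have "{1..4} - {3} = insert 4 (insert 2 {1::nat})" by auto
  moreover have "pair_prod d (insert 4 (insert 2 {1})) = d 1 2 * (d 1 4 * d 2 4)"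
    by (simp add: pair_prod_insert_greater pair_prod_singleton)
  ultimately show "pair_prod d ({1..4} - {3}) = delta_three_formula S x R 4"
    using S_mult_R[of 1 2 4] assms by (simp add: delta_three_formula_def prod_od_empty)
  show "delta_three_formula S x R (k+2)
      = delta_three_formula S x R k * (\<Prod>i\<in>{1..k}-{3}. d i (k+1) * d i (k+2)) * d (k+1) (k+2)"
    if "4 \<le> k" "even (k - 4)" "k + 2 \<le> n" for k
    using delta_three_formula_add_two that assms by simp
qed (use assms in auto)

end

section \<open>Case (iv): \<open>m\<close> odd, \<open>3 < m < n\<close>\<close>

definition delta_odd_formula ::
    "(nat \<Rightarrow> nat \<Rightarrow> nat \<Rightarrow> real) \<Rightarrow> (nat \<Rightarrow> nat \<Rightarrow> real) \<Rightarrow> real \<Rightarrow> nat \<Rightarrow> nat \<Rightarrow> real" where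
  "delta_odd_formula S x R n m =
        S 1 2 (m-1) * S 1 2 (m+1) * R^2 / x 1 2
      * prod_ev 2 (m-2) (\<lambda>l. S 1 l (l+1) * R)
      * prod_od (m+2) (n-1) (\<lambda>l. S 1 l (l+1) * R)
      * prod_od (m+2) (n-1) (\<lambda>l. S (m-1) l (l+1) * S (m-3) l (l+1) * R^2 / x l (l+1))
      * prod_od 3 (m-4) (\<lambda>k. S k (k+1) (m-1) * S k (k+1) (m+1) * R^2 / x k (k+1)
                              * prod_ev (k+1) (m-2) (\<lambda>l. S k l (l+1) * R / x l (l+1))
                              * prod_od (m+2) (n-1) (\<lambda>l. 1 / x l (l+1)))
      * prod_ev 2 (m-5) (\<lambda>k. prod_ev (k+2) (m-2) (\<lambda>l. S k l (l+1) * R))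
      * (\<Prod>k\<in>{2..m-4}. prod_od (m+2) (n-1) (\<lambda>l. S k l (l+1) * R))
      * S (m-2) (m-1) (m+1) * R
      * prod_od (m+2) (n-1) (\<lambda>l. S (m-2) l (l+1) * R / x l (l+1))
      * prod_od m (n-3) (\<lambda>k. S (k+1) (k+2) (k+3) * R)
      * (\<Prod>k\<in>{m..n-3}. prod_od (k+3) (n-1) (\<lambda>l. S (k+1) l (l+1) * R))
      * prod_od m (n-3) (\<lambda>k. prod_od (k+3) (n-1) (\<lambda>l. 1 / x l (l+1)))"

definition delta_odd_diag ::
    "(nat \<Rightarrow> nat \<Rightarrow> nat \<Rightarrow> real) \<Rightarrow> (nat \<Rightarrow> nat \<Rightarrow> real) \<Rightarrow> real \<Rightarrow> nat \<Rightarrow> real" where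
  "delta_odd_diag S x R m =
        S 1 2 (m-1) * S 1 2 (m+1) * R^2 / x 1 2
      * prod_ev 2 (m-2) (\<lambda>l. S 1 l (l+1) * R)
      * prod_od 3 (m-4) (\<lambda>k. S k (k+1) (m-1) * S k (k+1) (m+1) * R^2 / x k (k+1)
                              * prod_ev (k+1) (m-2) (\<lambda>l. S k l (l+1) * R / x l (l+1)))
      * prod_ev 2 (m-5) (\<lambda>k. prod_ev (k+2) (m-2) (\<lambda>l. S k l (l+1) * R))
      * (S (m-2) (m-1) (m+1) * R)"

lemma delta_odd_formula_diag: "5 \<le> m \<Longrightarrow> delta_odd_formula S x R (m+1) m = delta_odd_diag S x R m"
  unfolding delta_odd_formula_def delta_odd_diag_def by (simp add: prod_od_empty)

lemma prod_remove_split: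
  fixes f :: "nat \<Rightarrow> real"
  assumes "5 \<le> m" "m + 1 \<le> n"
  shows "(\<Prod>i\<in>{1..n}-{m}. f i) = f 1 * (\<Prod>i\<in>{2..m-4}. f i) * f (m-3) * f (m-2) * f (m-1) * (\<Prod>i\<in>{m+1..n-1}. f i) * f n"
proof -
  have "{1..n}-{m} = {1..m-1} \<union> {m+1..n}" using assms by auto
  then have split: "(\<Prod>i\<in>{1..n}-{m}. f i) = (\<Prod>i\<in>{1..m-1}. f i) * (\<Prod>i\<in>{m+1..n}. f i)"
    by (simp add: prod.union_disjoint)
  have "{1..m-1} = insert 1 (insert (m-3) (insert (m-2) (insert (m-1) {2..m-4})))"
    and "m-1 \<notin> {2..m-4}" "m-2 \<notin> insert (m-1) {2..m-4}"
    "m-3 \<notin> insert (m-2) (insert (m-1) {2..m-4})" "1 \<notin> insert (m-3) (insert (m-2) (insert (m-1) {2..m-4}))"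
    using assms by auto
  then have lower: "(\<Prod>i\<in>{1..m-1}. f i) = f 1 * (\<Prod>i\<in>{2..m-4}. f i) * f (m-3) * f (m-2) * f (m-1)"
    by (simp add: mult_ac)
  have upper: "(\<Prod>i\<in>{m+1..n}. f i) = (\<Prod>i\<in>{m+1..n-1}. f i) * f n"
    using assms prod.cl_ivl_Suc[of f "m+1" "n-1"] by simp
  show ?thesis unfolding split lower upper by (simp only: mult_ac)
qed

lemma prod_odd_diag_split:
  fixes f :: "nat \<Rightarrow> real"
  assumes "m = 2*p + 5"
  shows "(\<Prod>i\<in>{1..m-1}. f i)
       = f 1 * f 2 * prod_od 3 (m-4) f * prod_od 3 (m-4) (\<lambda>k. f (Suc k)) * f (m-2) * f (m-1)"
proof -
  have "{1..m-1} = insert 1 (insert 2 (insert (m-2) (insert (m-1) {3..m-3})))" using assms by auto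
  then have "(\<Prod>i\<in>{1..m-1}. f i) = f 1 * f 2 * f (m-2) * f (m-1) * (\<Prod>i\<in>{3..m-3}. f i)"
    using assms by (simp add: mult_ac)
  also have "(\<Prod>i\<in>{3..m-3}. f i) = prod_ev 3 (m-3) f * prod_od 3 (m-3) f"
    by (rule prod_ev_times_prod_od[symmetric])
  also have "prod_od 3 (m-3) f = prod_od 3 (m-4) f"
  proof -
    have "{l\<in>{3..m-3}. odd l} = {l\<in>{3..m-4}. odd l}" using assms by (auto simp: le_Suc_eq)
    then show ?thesis unfolding prod_od_def by simp
  qed
  also have "prod_ev 3 (m-3) f = prod_ev (Suc 3) (Suc (m-4)) f"
  proof -
    have "{l\<in>{3..m-3}. even l} = {l\<in>{Suc 3..Suc (m-4)}. even l}" using assms by (auto simp: le_Suc_eq)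
    then show ?thesis unfolding prod_ev_def by simp
  qed
  also have "\<dots> = prod_od 3 (m-4) (\<lambda>k. f (Suc k))"
    by (rule prod_od_Suc_shift[symmetric])
  finally show ?thesis by (simp only: mult_ac)
qed

lemma delta_odd_diag_add_two_unfold:
  assumes "m = 2*p + 5"
  shows "delta_odd_diag S x R (m+2) = S 1 2 (m+1) * S 1 2 (m+3) * R^2 / x 1 2
      * (prod_ev 2 (m-2) (\<lambda>l. S 1 l (l+1) * R) * (S 1 (m-1) m * R))
      * prod_od 3 (m-2) (\<lambda>k. S k (k+1) (m+1) * S k (k+1) (m+3) * R^2 / x k (k+1)
                              * prod_ev (k+1) m (\<lambda>l. S k l (l+1) * R / x l (l+1)))
      * prod_ev 2 (m-3) (\<lambda>k. prod_ev (k+2) m (\<lambda>l. S k l (l+1) * R))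
      * (S m (m+1) (m+3) * R)"
proof -
  have idx: "m+2-1 = m+1" "m+2+1 = m+3" "m+2-2 = m" "m+2-4 = m-2" "m+2-5 = m-3"
    "odd (m-2)" "2 \<le> m-2+1" "m-2+2 = m" "m-2+1 = m-1" "m-1+1 = m"
    using assms by simp_all
  have "prod_ev 2 m (\<lambda>l. S 1 l (l+1) * R) = prod_ev 2 (m-2) (\<lambda>l. S 1 l (l+1) * R) * (S 1 (m-1) m * R)"
    using prod_ev_snoc_odd[OF idx(6,7), of "\<lambda>l. S 1 l (l+1) * R"] by (simp only: idx(8-10))
  then show ?thesis unfolding delta_odd_diag_def idx(1-5) by simp
qed

lemma delta_odd_formula_add_two_quotient:
  assumes "even n" "odd m" "5 \<le> m" "m + 1 \<le> n"
  shows "delta_odd_formula S x R (n+2) m = delta_odd_formula S x R n m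
     * ((S 1 (n+1) (n+2) * R) * (S (m-1) (n+1) (n+2) * S (m-3) (n+1) (n+2) * R^2 / x (n+1) (n+2))
        * prod_od 3 (m-4) (\<lambda>k. 1 / x (n+1) (n+2)) * (\<Prod>k\<in>{2..m-4}. S k (n+1) (n+2) * R)
        * (S (m-2) (n+1) (n+2) * R / x (n+1) (n+2)) * (S n (n+1) (n+2) * R)
        * (\<Prod>k\<in>{m..n-2}. S (k+1) (n+1) (n+2) * R) * prod_od m (n-2) (\<lambda>k. 1 / x (n+1) (n+2)))"
proof -
  have idx: "n + 2 - 3 = n - 1" "n + 2 - 1 = n + 1" "n + 1 + 1 = n + 2" "n + 1 - 3 = n - 2"
    using assms by auto
  have snoc: "prod_od (m+2) (n+1) f = prod_od (m+2) (n-1) f * f (n+1)" for f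
    using prod_od_snoc_odd[of "n-1" "m+2" f] assms by simp
  have snoc_x: "prod_od 3 (m-4) (\<lambda>k. g k * prod_od (m+2) (n+1) (\<lambda>l. 1 / x l (l+1)))
      = prod_od 3 (m-4) (\<lambda>k. g k * prod_od (m+2) (n-1) (\<lambda>l. 1 / x l (l+1)))
        * prod_od 3 (m-4) (\<lambda>k. 1 / x (n+1) (n+2))" for g
    unfolding snoc prod_od_distrib[symmetric] by (simp only: mult.assoc idx(3))
  have snoc_S: "(\<Prod>k\<in>{2..m-4}. prod_od (m+2) (n+1) (\<lambda>l. S k l (l+1) * R))
     = (\<Prod>k\<in>{2..m-4}. prod_od (m+2) (n-1) (\<lambda>l. S k l (l+1) * R)) * (\<Prod>k\<in>{2..m-4}. S k (n+1) (n+2) * R)"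
    unfolding snoc by (simp add: prod.distrib)
  have snoc_chain: "prod_od m (n-1) (\<lambda>k. S (k+1) (k+2) (k+3) * R)
      = prod_od m (n-3) (\<lambda>k. S (k+1) (k+2) (k+3) * R) * (S n (n+1) (n+2) * R)"
  proof -
    have n3: "odd (n-3)" "m \<le> n-3+2" "n-1 = n-3+2" "n-3+2+1 = n" "n-3+2+2 = n+1" "n-3+2+3 = n+2"
      using assms by (auto elim: oddE)
    show ?thesis unfolding n3(3) prod_od_snoc_odd[OF n3(1,2)] n3(4-6) ..
  qed
  have nested_S: "(\<Prod>k\<in>{m..n-1}. prod_od (k+3) (n+1) (\<lambda>l. S (k+1) l (l+1) * R))
     = (\<Prod>k\<in>{m..n-3}. prod_od (k+3) (n-1) (\<lambda>l. S (k+1) l (l+1) * R)) * (\<Prod>k\<in>{m..n-2}. S (k+1) (n+1) (n+2) * R)"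
    using prod_nested_prod_od_snoc[of n 3] assms by simp
  have nested_x: "prod_od m (n-1) (\<lambda>k. prod_od (k+3) (n+1) (\<lambda>l. 1 / x l (l+1)))
     = prod_od m (n-3) (\<lambda>k. prod_od (k+3) (n-1) (\<lambda>l. 1 / x l (l+1))) * prod_od m (n-2) (\<lambda>k. 1 / x (n+1) (n+2))"
    using prod_od_nested_prod_od_snoc[of n 3] assms by simp
  show ?thesis
    unfolding delta_odd_formula_def idx snoc_x snoc_S snoc_chain nested_S nested_x
      snoc[of "\<lambda>l. S 1 l (l+1) * R"] snoc[of "\<lambda>l. S (m-2) l (l+1) * R / x l (l+1)"]
      snoc[of "\<lambda>l. S (m-1) l (l+1) * S (m-3) l (l+1) * R^2 / x l (l+1)"]
    by (simp only: mult_ac)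
qed

context inscribed_chords
begin

lemma delta_odd_formula_add_two:
  assumes "even n" "odd m" "5 \<le> m" "m + 1 \<le> n" "n + 2 \<le> N"
  shows "delta_odd_formula S x R (n+2) m
       = delta_odd_formula S x R n m * (\<Prod>i\<in>{1..n}-{m}. d i (n+1) * d i (n+2)) * d (n+1) (n+2)"
proof -
  obtain p where p: "m = 2*p + 5" using assms(2,3) by (rule odd_ge_5E)
  obtain q where q: "n = m + 1 + 2*q"
  proof -
    have "even (n - m - 1)" using assms by auto
    then obtain q where "n - m - 1 = 2*q" by (rule evenE)
    then show ?thesis using assms(4) that[of q] by simp
  qed
  let ?f = "\<lambda>i. S i (n+1) (n+2) * R" and ?X = "1 / x (n+1) (n+2)"
  have "(m-4+1) div 2 - 3 div 2 = p" "(n-2+1) div 2 - m div 2 = q" "(n-2) div 2 = p + q + 2"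
    using p q by simp_all
  then have const: "prod_od 3 (m-4) (\<lambda>k. ?X) = ?X^p" "prod_od m (n-2) (\<lambda>k. ?X) = ?X^q"
    and exp: "(n-2) div 2 = p + q + 2"
    by (simp_all only: prod_od_constant)
  have shift: "(\<Prod>k\<in>{m..n-2}. S (k+1) (n+1) (n+2) * R) = (\<Prod>i\<in>{m+1..n-1}. ?f i)"
  proof -
    have "{m+1..n-1} = {Suc m..Suc (n-2)}" using assms by auto
    then show ?thesis by (simp only: prod.shift_bounds_cl_Suc_ivl) simp
  qed
  have "delta_odd_formula S x R (n+2) m = delta_odd_formula S x R n m
      * ((?f 1 * (\<Prod>i\<in>{2..m-4}. ?f i) * ?f (m-3) * ?f (m-2) * ?f (m-1) * (\<Prod>i\<in>{m+1..n-1}. ?f i) * ?f n)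
         * ?X^((n-2) div 2))"
    unfolding delta_odd_formula_add_two_quotient[OF assms(1-4)] const shift exp
    by (simp add: power_add power2_eq_square divide_inverse mult_ac)
  also have "\<dots> = delta_odd_formula S x R n m * ((\<Prod>i\<in>{1..n}-{m}. ?f i) * ?X^((n-2) div 2))"
    using prod_remove_split[of m n ?f] assms by simp
  also have "(\<Prod>i\<in>{1..n}-{m}. ?f i) * ?X^((n-2) div 2) = (\<Prod>i\<in>{1..n}-{m}. d i (n+1) * d i (n+2)) * d (n+1) (n+2)"
    using assms by (intro prod_S_new_pair_remove) auto
  finally show ?thesis by (simp add: mult.assoc)
qed

lemma delta_odd_diag_factor_add_two:
  assumes "m = 2*p + 5" "m + 3 \<le> N" "3 \<le> k" "k \<le> m - 4"
  shows "S k (k+1) (m+1) * S k (k+1) (m+3) * R^2 / x k (k+1) * prod_ev (k+1) m (\<lambda>l. S k l (l+1) * R / x l (l+1))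
       = S k (k+1) (m-1) * S k (k+1) (m+1) * R^2 / x k (k+1) * prod_ev (k+1) (m-2) (\<lambda>l. S k l (l+1) * R / x l (l+1))
         * (d k (m+3) * d (k+1) (m+3) * d k m / (d (k+1) (m-1) * d (m-1) m))"
proof -
  have idx: "odd (m-2)" "k+1 \<le> m-2+1" "m-2+2 = m" "m-2+1 = m-1" "m-1+1 = m" using assms by auto
  have split: "prod_ev (k+1) m (\<lambda>l. S k l (l+1) * R / x l (l+1))
      = prod_ev (k+1) (m-2) (\<lambda>l. S k l (l+1) * R / x l (l+1)) * (S k (m-1) m * R / x (m-1) m)"
    using prod_ev_snoc_odd[OF idx(1,2), of "\<lambda>l. S k l (l+1) * R / x l (l+1)"] by (simp only: idx(3-5))
  have S: "S k (k+1) (m+3) = d k (k+1) * d (k+1) (m+3) * d k (m+3) / R"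
    "S k (m-1) m = d k (m-1) * d (m-1) m * d k m / R"
    "S k (k+1) (m-1) = d k (k+1) * d (k+1) (m-1) * d k (m-1) / R"
    using assms by (intro S_eq_chords; simp)+
  have x: "x (m-1) m = d (m-1) m ^ 2" "x k (k+1) = d k (k+1) ^ 2"
    using x_consecutive[of "m-1"] x_consecutive[of k] idx(5) by simp_all
  have "d k (k+1) > 0" "d (k+1) (m-1) > 0" "d k (m-1) > 0" "d (m-1) m > 0"
    using assms by (intro d_pos; simp)+
  then show ?thesis unfolding split S x using R_pos by (simp add: field_simps power2_eq_square)
qed

lemma delta_odd_diag_odd_part_add_two:
  assumes mp: "m = 2*p + 5" and N: "m + 3 \<le> N"
  shows "prod_od 3 (m-2) (\<lambda>k. S k (k+1) (m+1) * S k (k+1) (m+3) * R^2 / x k (k+1)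
                              * prod_ev (k+1) m (\<lambda>l. S k l (l+1) * R / x l (l+1)))
       = prod_od 3 (m-4) (\<lambda>k. S k (k+1) (m-1) * S k (k+1) (m+1) * R^2 / x k (k+1)
                              * prod_ev (k+1) (m-2) (\<lambda>l. S k l (l+1) * R / x l (l+1)))
         * (prod_od 3 (m-4) (\<lambda>k. d k (m+3)) * prod_od 3 (m-4) (\<lambda>k. d (Suc k) (m+3))
            * prod_od 3 (m-4) (\<lambda>k. d k m) / (prod_od 3 (m-4) (\<lambda>k. d (Suc k) (m-1)) * d (m-1) m ^ p))
         * (S (m-2) (m-1) (m+1) * S (m-2) (m-1) (m+3) * R^2 / x (m-2) (m-1)
            * (S (m-2) (m-1) m * R / x (m-1) m))"
proof -
  let ?F = "\<lambda>k. S k (k+1) (m+1) * S k (k+1) (m+3) * R^2 / x k (k+1) * prod_ev (k+1) m (\<lambda>l. S k l (l+1) * R / x l (l+1))"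
  let ?F' = "\<lambda>k. S k (k+1) (m-1) * S k (k+1) (m+1) * R^2 / x k (k+1) * prod_ev (k+1) (m-2) (\<lambda>l. S k l (l+1) * R / x l (l+1))"
  let ?q = "\<lambda>k. d k (m+3) * d (k+1) (m+3) * d k m / (d (k+1) (m-1) * d (m-1) m)"
  have idx: "odd (m-4)" "3 \<le> m-4+2" "m-4+2 = m-2" "even (m-1)" "m-2+1 = m-1" "m-1+1 = m"
    using mp by auto
  have "prod_od 3 (m-2) ?F = prod_od 3 (m-4) ?F * ?F (m-2)"
    using prod_od_snoc_odd[OF idx(1,2), of ?F] by (simp only: idx(3))
  also have "prod_od 3 (m-4) ?F = prod_od 3 (m-4) ?F' * prod_od 3 (m-4) ?q"
    unfolding prod_od_distrib[symmetric] unfolding prod_od_def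
    using delta_odd_diag_factor_add_two[OF mp N] by (intro prod.cong) auto
  also have "prod_od 3 (m-4) ?q = prod_od 3 (m-4) (\<lambda>k. d k (m+3)) * prod_od 3 (m-4) (\<lambda>k. d (Suc k) (m+3))
      * prod_od 3 (m-4) (\<lambda>k. d k m) / (prod_od 3 (m-4) (\<lambda>k. d (Suc k) (m-1)) * d (m-1) m ^ p)"
  proof -
    have "prod_od 3 (m-4) ?q = prod_od 3 (m-4) (\<lambda>k. d k (m+3) * d (k+1) (m+3) * d k m)
        / prod_od 3 (m-4) (\<lambda>k. d (k+1) (m-1) * d (m-1) m)"
      unfolding prod_od_def by (rule prod_dividef)
    moreover have "prod_od 3 (m-4) (\<lambda>k. d (m-1) m) = d (m-1) m ^ p" using mp by (simp add: prod_od_constant)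
    ultimately show ?thesis by (simp only: prod_od_distrib Suc_eq_plus1)
  qed
  also have "?F (m-2) = S (m-2) (m-1) (m+1) * S (m-2) (m-1) (m+3) * R^2 / x (m-2) (m-1)
      * (S (m-2) (m-1) m * R / x (m-1) m)"
    using prod_ev_pair[OF idx(4), of "\<lambda>l. S (m-2) l (l+1) * R / x l (l+1)"] by (simp only: idx(5,6))
  finally show ?thesis by (simp only: mult.assoc)
qed

lemma prod_ev_S_last_pair:
  assumes mp: "m = 2*p + 5" and N: "m \<le> N"
  shows "prod_ev 2 (m-3) (\<lambda>k. S k (m-1) m * R)
       = (d 2 (m-1) * prod_od 3 (m-4) (\<lambda>k. d (Suc k) (m-1)))
         * (d 2 m * prod_od 3 (m-4) (\<lambda>k. d (Suc k) m)) * d (m-1) m ^ (p+1)"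
proof -
  have "prod_ev 2 (m-3) (\<lambda>k. S k (m-1) m * R) = prod_ev 2 (m-3) (\<lambda>k. d k (m-1) * d k m * d (m-1) m)"
    unfolding prod_ev_def using S_mult_R mp N by (intro prod.cong) (auto simp: mult_ac)
  also have "\<dots> = prod_ev 2 (m-3) (\<lambda>k. d k (m-1)) * prod_ev 2 (m-3) (\<lambda>k. d k m) * d (m-1) m ^ (p+1)"
    using mp by (simp add: prod_ev_distrib prod_ev_constant)
  also have "prod_ev 2 (m-3) (\<lambda>k. d k (m-1)) = d 2 (m-1) * prod_od 3 (m-4) (\<lambda>k. d (Suc k) (m-1))"
    using prod_ev_first[of 2 "m-3" "\<lambda>k. d k (m-1)"] mp by simp
  also have "prod_ev 2 (m-3) (\<lambda>k. d k m) = d 2 m * prod_od 3 (m-4) (\<lambda>k. d (Suc k) m)"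
    using prod_ev_first[of 2 "m-3" "\<lambda>k. d k m"] mp by simp
  finally show ?thesis .
qed

lemma delta_odd_diag_even_part_add_two:
  assumes mp: "m = 2*p + 5" and N: "m + 3 \<le> N"
  shows "prod_ev 2 (m-3) (\<lambda>k. prod_ev (k+2) m (\<lambda>l. S k l (l+1) * R))
       = prod_ev 2 (m-5) (\<lambda>k. prod_ev (k+2) (m-2) (\<lambda>l. S k l (l+1) * R))
         * ((d 2 (m-1) * prod_od 3 (m-4) (\<lambda>k. d (Suc k) (m-1)))
            * (d 2 m * prod_od 3 (m-4) (\<lambda>k. d (Suc k) m)) * d (m-1) m ^ (p+1))"
proof -
  let ?G = "\<lambda>k. prod_ev (k+2) m (\<lambda>l. S k l (l+1) * R)"
  let ?G' = "\<lambda>k. prod_ev (k+2) (m-2) (\<lambda>l. S k l (l+1) * R)"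
  have idx: "even (m-5)" "2 \<le> m-5+2" "m-5+2 = m-3" "m-3+2 = m-1" "odd (m-2)" "m-2+2 = m"
    "m-2+1 = m-1" "m-1+1 = m" "even (m-1)" "5 \<le> m"
    using mp by auto
  have "prod_ev 2 (m-3) ?G = prod_ev 2 (m-5) ?G * ?G (m-3)"
    using prod_ev_snoc_even[OF idx(1,2), of ?G] by (simp only: idx(3))
  also have "prod_ev 2 (m-5) ?G = prod_ev 2 (m-5) ?G' * prod_ev 2 (m-5) (\<lambda>k. S k (m-1) m * R)"
  proof -
    have "?G k = ?G' k * (S k (m-1) m * R)" if "k \<le> m-5" for k
      using prod_ev_snoc_odd[OF idx(5), of "k+2" "\<lambda>l. S k l (l+1) * R"] that idx(6-8,10) by simp
    then have "prod_ev 2 (m-5) ?G = prod_ev 2 (m-5) (\<lambda>k. ?G' k * (S k (m-1) m * R))"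
      unfolding prod_ev_def[of 2] by (intro prod.cong) auto
    then show ?thesis by (simp only: prod_ev_distrib)
  qed
  also have "?G (m-3) = S (m-3) (m-1) m * R"
    using prod_ev_pair[OF idx(9), of "\<lambda>l. S (m-3) l (l+1) * R"] by (simp only: idx(4,8))
  also have "prod_ev 2 (m-5) ?G' * prod_ev 2 (m-5) (\<lambda>k. S k (m-1) m * R) * (S (m-3) (m-1) m * R)
      = prod_ev 2 (m-5) ?G' * prod_ev 2 (m-3) (\<lambda>k. S k (m-1) m * R)"
    using prod_ev_snoc_even[OF idx(1,2), of "\<lambda>k. S k (m-1) m * R"] by (simp only: idx(3) mult.assoc)
  finally show ?thesis using prod_ev_S_last_pair[OF mp] N by simp
qed

lemma delta_odd_diag_add_two:
  assumes mp: "m = 2*p + 5" and N: "m + 3 \<le> N"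
  shows "delta_odd_diag S x R (m+2) = delta_odd_diag S x R m
     * ((\<Prod>i\<in>{1..m-1}. d i m * d i (m+3)) * d m (m+1) * d m (m+3) * d (m+1) (m+3))"
proof -
  let ?T = "m+3" and ?D' = "d (m-1) m"
  let ?OT = "prod_od 3 (m-4) (\<lambda>k. d k ?T)" and ?ET = "prod_od 3 (m-4) (\<lambda>k. d (Suc k) ?T)"
  let ?OM = "prod_od 3 (m-4) (\<lambda>k. d k m)" and ?EM = "prod_od 3 (m-4) (\<lambda>k. d (Suc k) m)"
  let ?E1 = "prod_od 3 (m-4) (\<lambda>k. d (Suc k) (m-1))"
  have Q: "(\<Prod>i\<in>{1..m-1}. d i m * d i (m+3)) = (d 1 m * d 2 m * ?OM * ?EM * d (m-2) m * ?D')
      * (d 1 ?T * d 2 ?T * ?OT * ?ET * d (m-2) ?T * d (m-1) ?T)"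
    unfolding prod.distrib prod_odd_diag_split[OF mp, of "\<lambda>i. d i m"] prod_odd_diag_split[OF mp, of "\<lambda>i. d i ?T"] ..
  have pos: "\<And>i j. 1 \<le> i \<Longrightarrow> i < j \<Longrightarrow> j \<le> m+3 \<Longrightarrow> d i j > 0" using d_pos N by simp
  have E1_pos: "?E1 > 0" unfolding prod_od_def using pos mp by (intro prod_pos) auto
  have S_subst:
    "S 1 2 (m-1) = d 1 2 * d 2 (m-1) * d 1 (m-1) / R"
    "S 1 2 ?T = d 1 2 * d 2 ?T * d 1 ?T / R"
    "S 1 (m-1) m = d 1 (m-1) * ?D' * d 1 m / R"
    "S (m-2) (m-1) (m+1) = d (m-2) (m-1) * d (m-1) (m+1) * d (m-2) (m+1) / R"
    "S (m-2) (m-1) ?T = d (m-2) (m-1) * d (m-1) ?T * d (m-2) ?T / R"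
    "S (m-2) (m-1) m = d (m-2) (m-1) * ?D' * d (m-2) m / R"
    "S m (m+1) ?T = d m (m+1) * d (m+1) ?T * d m ?T / R"
    using mp N by (intro S_eq_chords; simp)+
  have "m - 2 + 1 = m - 1" "m - 1 + 1 = m" using mp by simp_all
  then have x_subst: "x (m-2) (m-1) = d (m-2) (m-1) ^ 2" "x (m-1) m = ?D'^2" "x 1 2 = d 1 2 ^ 2"
    using x_consecutive[of "m-2"] x_consecutive[of "m-1"] x_consecutive[of 1]
    by (simp_all add: numeral_2_eq_2)
  have positive: "d 1 2 > 0" "d 2 (m-1) > 0" "d 1 (m-1) > 0" "d (m-2) (m-1) > 0" "d (m-1) (m+1) > 0"
    "d (m-2) (m+1) > 0" "?D' > 0"
    using mp by (intro pos; simp)+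
  show ?thesis
    unfolding delta_odd_diag_add_two_unfold[OF mp] delta_odd_diag_def[of S x R m] Q
      delta_odd_diag_odd_part_add_two[OF mp N] delta_odd_diag_even_part_add_two[OF mp N]
      S_subst x_subst power_Suc2
    using positive E1_pos R_pos by (simp add: field_simps power2_eq_square)
qed

lemma pair_prod_delta_odd_diag:
  assumes "m = 2*p + 5" "m + 1 \<le> N"
  shows "pair_prod d ({1..m+1} - {m}) = delta_odd_diag S x R m"
  using assms
proof (induction p arbitrary: m)
  case 0
  have "{1..6} - {5} = insert 6 (insert 4 (insert 3 (insert 2 {1::nat})))" by auto
  then have "pair_prod d ({1..m+1} - {m})
      = d 1 2 * (d 1 3 * d 2 3) * (d 1 4 * d 2 4 * d 3 4) * (d 1 6 * d 2 6 * d 3 6 * d 4 6)"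
    using 0 by (simp add: pair_prod_insert_greater pair_prod_singleton mult_ac)
  also have "\<dots> = S 1 2 4 * S 1 2 6 * R^2 / x 1 2 * (S 1 2 3 * R) * (S 3 4 6 * R)"
  proof -
    have subst: "S 1 2 4 = d 1 2 * d 2 4 * d 1 4 / R" "S 1 2 6 = d 1 2 * d 2 6 * d 1 6 / R"
      "S 1 2 3 = d 1 2 * d 2 3 * d 1 3 / R" "S 3 4 6 = d 3 4 * d 4 6 * d 3 6 / R"
      "x 1 2 = d 1 2 ^ 2"
      using 0 x_consecutive[of 1] by (auto intro!: S_eq_chords simp: numeral_2_eq_2)
    have "d 1 2 > 0" using d_pos[of 1 2] 0 by simp
    then show ?thesis unfolding subst using R_pos by (simp add: field_simps power2_eq_square)
  qed
  also have "\<dots> = delta_odd_diag S x R m"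
    unfolding delta_odd_diag_def using 0 by (simp add: prod_ev_pair[of 2, simplified] prod_od_empty prod_ev_empty)
  finally show ?case .
next
  case (Suc p)
  let ?m = "2*p + 5"
  have "pair_prod d ({1..?m+3} - {?m+2}) = pair_prod d ({1..?m+1} - {?m})
      * ((\<Prod>i\<in>{1..?m-1}. d i ?m * d i (?m+3)) * d ?m (?m+1) * d ?m (?m+3) * d (?m+1) (?m+3))"
    by (rule pair_prod_move_gap) simp
  also have "\<dots> = delta_odd_diag S x R (?m+2)"
    using Suc delta_odd_diag_add_two[of ?m p] by simp
  finally show ?case using Suc.prems by (simp add: add_ac)
qed

lemma pair_prod_delta_odd:
  assumes "even n" "odd m" "5 \<le> m" "m + 1 \<le> n" "n \<le> N"
  shows "pair_prod d ({1..n} - {m}) = delta_odd_formula S x R n m"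
proof (rule pair_prod_induct_two[where n\<^sub>0 = "m+1"])
  obtain p where mp: "m = 2*p + 5" using assms(2,3) by (rule odd_ge_5E)
  have "m + 1 \<le> N" using assms by simp
  then show "pair_prod d ({1..m+1} - {m}) = delta_odd_formula S x R (m+1) m"
    by (simp only: pair_prod_delta_odd_diag[OF mp] delta_odd_formula_diag[OF assms(3)])
  show "delta_odd_formula S x R (k+2) m
      = delta_odd_formula S x R k m * (\<Prod>i\<in>{1..k}-{m}. d i (k+1) * d i (k+2)) * d (k+1) (k+2)"
    if "m + 1 \<le> k" "even (k - (m+1))" "k + 2 \<le> n" for k
    using delta_odd_formula_add_two that assms by simp
qed (use assms in auto)

end

theorem proposition3p8:
  fixes A :: "nat \<Rightarrow> real \<times> real" and n :: nat and R :: real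
  assumes "even n" and "n > 4" and "cyclic_anticlockwise A n R"
  shows
   "(\<forall>m. even m \<and> 2 \<le> m \<and> m \<le> n \<longrightarrow>
      delta_m A n m =
        R ^ ((n - 2) div 2)
      * (\<Prod>k\<in>{1..m-1}. prod_ev (k+1) (m-1) (\<lambda>l. Sar A k l (l+1))
                         * prod_od (m+1) (n-1) (\<lambda>l. Sar A k l (l+1)))
      * (\<Prod>k\<in>{m..n-3}. prod_od (k+2) (n-1) (\<lambda>l. Sar A (k+1) l (l+1)))
      * prod_ev 2 (m-1) (\<lambda>k. prod_ev (k+1) (m-1) (\<lambda>l. R^2 / xsq A l (l+1)))
      * prod_ev m (n-3) (\<lambda>k. prod_od (k+2) (n-1) (\<lambda>l. R^2 / xsq A l (l+1)))
      * prod_od (m+1) (n-1) (\<lambda>l. R^(m-2) / xsq A l (l+1) ^ ((m-2) div 2)))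
  \<and> delta_m A n 1 =
        (\<Prod>k\<in>{1..n-3}. prod_od (k+2) (n-1) (\<lambda>l. Sar A (k+1) l (l+1) * R))
      * prod_ev 2 (n-3) (\<lambda>k. prod_od (k+2) (n-1) (\<lambda>l. 1 / xsq A l (l+1)))
  \<and> delta_m A n 3 =
        Sar A 1 2 4 * R
      * prod_od 5 (n-1) (\<lambda>l. Sar A 1 l (l+1) * Sar A 2 l (l+1) * R^2)
      * (\<Prod>k\<in>{3..n-3}. prod_od (k+2) (n-1) (\<lambda>l. Sar A (k+1) l (l+1) * R))
      * prod_od 3 (n-3) (\<lambda>k. prod_od (k+2) (n-1) (\<lambda>l. 1 / xsq A l (l+1)))
  \<and> (\<forall>m. odd m \<and> 3 < m \<and> m \<le> n - 1 \<longrightarrow>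
      delta_m A n m =
        Sar A 1 2 (m-1) * Sar A 1 2 (m+1) * R^2 / xsq A 1 2
      * prod_ev 2 (m-2) (\<lambda>l. Sar A 1 l (l+1) * R)
      * prod_od (m+2) (n-1) (\<lambda>l. Sar A 1 l (l+1) * R)
      * prod_od (m+2) (n-1) (\<lambda>l. Sar A (m-1) l (l+1) * Sar A (m-3) l (l+1) * R^2 / xsq A l (l+1))
      * prod_od 3 (m-4) (\<lambda>k. Sar A k (k+1) (m-1) * Sar A k (k+1) (m+1) * R^2 / xsq A k (k+1)
                              * prod_ev (k+1) (m-2) (\<lambda>l. Sar A k l (l+1) * R / xsq A l (l+1))
                              * prod_od (m+2) (n-1) (\<lambda>l. 1 / xsq A l (l+1)))
      * prod_ev 2 (m-5) (\<lambda>k. prod_ev (k+2) (m-2) (\<lambda>l. Sar A k l (l+1) * R))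
      * (\<Prod>k\<in>{2..m-4}. prod_od (m+2) (n-1) (\<lambda>l. Sar A k l (l+1) * R))
      * Sar A (m-2) (m-1) (m+1) * R
      * prod_od (m+2) (n-1) (\<lambda>l. Sar A (m-2) l (l+1) * R / xsq A l (l+1))
      * prod_od m (n-3) (\<lambda>k. Sar A (k+1) (k+2) (k+3) * R)
      * (\<Prod>k\<in>{m..n-3}. prod_od (k+3) (n-1) (\<lambda>l. Sar A (k+1) l (l+1) * R))
      * prod_od m (n-3) (\<lambda>k. prod_od (k+3) (n-1) (\<lambda>l. 1 / xsq A l (l+1))))"
proof -
  interpret inscribed_chords "dl A" "Sar A" "xsq A" R n
    using assms(3) by (rule cyclic_anticlockwise_inscribed_chords)
  have "delta_m A n m = delta_even_formula (Sar A) (xsq A) R n m" if "even m \<and> 2 \<le> m \<and> m \<le> n" for m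
    using pair_prod_delta_even[of n m] that assms by (simp add: delta_m_eq_pair_prod)
  moreover have "delta_m A n 1 = delta_one_formula (Sar A) (xsq A) R n"
    using pair_prod_delta_one[of n] assms by (simp add: delta_m_eq_pair_prod)
  moreover have "delta_m A n 3 = delta_three_formula (Sar A) (xsq A) R n"
    using pair_prod_delta_three[of n] assms by (simp add: delta_m_eq_pair_prod)
  moreover have "delta_m A n m = delta_odd_formula (Sar A) (xsq A) R n m" if "odd m \<and> 3 < m \<and> m \<le> n - 1" for m
  proof -
    have "5 \<le> m" "m + 1 \<le> n" using that assms(2) by (auto elim!: oddE)
    then show ?thesis using pair_prod_delta_odd[of n m] that assms by (simp add: delta_m_eq_pair_prod)
  qed
  ultimately show ?thesis
    unfolding delta_even_formula_def delta_one_formula_def delta_three_formula_def delta_odd_formula_def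
    by blast
qed

end
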